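(* Let $x,w\in W$ and $s=s_\alpha$ with $\alpha$ a simple root, and assume $x<w$, $sw<w$ and $x<sx$. If $\#S(x,w)=\ell(w)-\ell(x)$, then $S(x,sw)=S(x,w)\setminus\{-w^{-1}\alpha\}$.
   Context: Let $W$ be the Weyl group of a finite reduced root system $\Phi$ with positive roots $\Phi_+$, length $\ell$ and Bruhat order $\le$. For $x\le w$, $S(x,w)=\{\beta\in\Phi_+: x\le ws_\beta<w\}$. *)

theory Defs
  imports "HOL-Analysis.Analysis"
begin

definition refl :: "'a::real_inner \<Rightarrow> 'a \<Rightarrow> 'a" where
  "refl a v = v - (2 * (v \<bullet> a) / (a \<bullet> a)) *\<^sub>R a"

definition root_system :: "'a::euclidean_space set \<Rightarrow> bool" where
  "root_system \<Phi> \<longleftrightarrow> finite \<Phi> \<and> 0 \<notin> \<Phi> \<and> span \<Phi> = UNIV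
     \<and> (\<forall>a\<in>\<Phi>. \<forall>b\<in>\<Phi>. refl a b \<in> \<Phi>)
     \<and> (\<forall>a\<in>\<Phi>. \<forall>b\<in>\<Phi>. 2 * (b \<bullet> a) / (a \<bullet> a) \<in> \<int>)
     \<and> (\<forall>a\<in>\<Phi>. \<forall>c::real. c *\<^sub>R a \<in> \<Phi> \<longrightarrow> c = 1 \<or> c = -1)"

definition positive_system :: "'a::euclidean_space set \<Rightarrow> 'a set \<Rightarrow> bool" where
  "positive_system \<Phi> P \<longleftrightarrow> P \<subseteq> \<Phi> \<and>
     (\<exists>u. (\<forall>b\<in>\<Phi>. u \<bullet> b \<noteq> 0) \<and> P = {b\<in>\<Phi>. u \<bullet> b > 0})"

definition simple_roots :: "'a::euclidean_space set \<Rightarrow> 'a set" where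
  "simple_roots P = {a\<in>P. \<not> (\<exists>b\<in>P. \<exists>c\<in>P. a = b + c)}"

inductive_set weyl_group :: "'a::euclidean_space set \<Rightarrow> ('a \<Rightarrow> 'a) set" for \<Phi> where
  weyl_id: "id \<in> weyl_group \<Phi>"
| weyl_step: "w \<in> weyl_group \<Phi> \<Longrightarrow> a \<in> \<Phi> \<Longrightarrow> refl a \<circ> w \<in> weyl_group \<Phi>"

definition word_prod :: "'a::euclidean_space list \<Rightarrow> 'a \<Rightarrow> 'a" where
  "word_prod as = foldr (\<lambda>a f. refl a \<circ> f) as id"

definition weyl_length :: "'a::euclidean_space set \<Rightarrow> ('a \<Rightarrow> 'a) \<Rightarrow> nat" where
  "weyl_length P w = (LEAST n. \<exists>as. set as \<subseteq> simple_roots P \<and> length as = n \<and> word_prod as = w)"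

inductive bruhat_le :: "'a::euclidean_space set \<Rightarrow> 'a set \<Rightarrow> ('a \<Rightarrow> 'a) \<Rightarrow> ('a \<Rightarrow> 'a) \<Rightarrow> bool"
  for \<Phi> P where
  bruhat_refl: "x \<in> weyl_group \<Phi> \<Longrightarrow> bruhat_le \<Phi> P x x"
| bruhat_step: "bruhat_le \<Phi> P x y \<Longrightarrow> b \<in> P \<Longrightarrow>
     weyl_length P y < weyl_length P (y \<circ> refl b) \<Longrightarrow> bruhat_le \<Phi> P x (y \<circ> refl b)"

definition bruhat_lt :: "'a::euclidean_space set \<Rightarrow> 'a set \<Rightarrow> ('a \<Rightarrow> 'a) \<Rightarrow> ('a \<Rightarrow> 'a) \<Rightarrow> bool" where
  "bruhat_lt \<Phi> P x y \<longleftrightarrow> bruhat_le \<Phi> P x y \<and> x \<noteq> y"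

definition S_set :: "'a::euclidean_space set \<Rightarrow> 'a set \<Rightarrow> ('a \<Rightarrow> 'a) \<Rightarrow> ('a \<Rightarrow> 'a) \<Rightarrow> 'a set" where
  "S_set \<Phi> P x w = {b\<in>P. bruhat_le \<Phi> P x (w \<circ> refl b) \<and> bruhat_lt \<Phi> P (w \<circ> refl b) w}"

end

theory Submission
  imports Defs
begin

text \<open>Write s = s_\<alpha> and c = w\<inverse>(\<alpha>). Since sw < w, the root c is negative and
  sw = w s_c. For a positive root \<beta> \<noteq> -c the root w\<beta> is neither \<alpha> nor -\<alpha>, and s
  permutes the positive roots other than \<alpha>; hence sw s_\<beta> < sw iff w\<beta> is negative iff
  w s_\<beta> < w, while \<beta> = -c is excluded on the left because (sw)(-c) = \<alpha> is positive.
  The Bruhat condition is unchanged as well: the lifting property together with x < sx gives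
  x \<le> v \<Longrightarrow> x \<le> sv for every v, so x \<le> sw s_\<beta> iff x \<le> w s_\<beta>.\<close>

section \<open>Reflections and the Weyl group\<close>

lemma refl_add: "refl a (x + y) = refl a x + refl a y"
  by (simp add: refl_def inner_add_left add_divide_distrib algebra_simps)

lemma refl_scaleR: "refl a (c *\<^sub>R x) = c *\<^sub>R refl a x"
  by (simp add: refl_def algebra_simps)

lemma refl_minus: "refl a (- x) = - refl a x"
  by (simp add: refl_def)

lemma linear_refl: "linear (refl a)"
  by (rule linearI) (simp_all add: refl_add refl_scaleR)

text \<open>Division by zero makes refl 0 = id, so none of these identities needs a \<noteq> 0.\<close>

lemma refl_self: "refl a a = - a"
  by (cases "a = 0") (simp_all add: refl_def scaleR_2)

lemma refl_refl: "refl a (refl a v) = v"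
  by (cases "a = 0") (simp_all add: refl_def inner_diff_left)

lemma refl_comp_refl: "refl a \<circ> refl a = id"
  by (auto simp: refl_refl)

lemma refl_comp_refl_comp: "refl a \<circ> (refl a \<circ> f) = f"
  by (auto simp: refl_refl)

lemma inner_refl: "refl a x \<bullet> refl a y = x \<bullet> y"
  by (cases "a = 0") (simp_all add: refl_def inner_diff_left inner_diff_right algebra_simps inner_commute)

lemma refl_uminus: "refl (- a) = refl a"
  by (rule ext) (simp add: refl_def)

lemma orthogonal_comp_refl:
  assumes "linear z" and "\<And>x y. z x \<bullet> z y = x \<bullet> y"
  shows "z \<circ> refl c = refl (z c) \<circ> z"
proof (rule ext)
  fix v
  have "z (refl c v) = z v - (2 * (v \<bullet> c) / (c \<bullet> c)) *\<^sub>R z c"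
    unfolding refl_def using assms(1) by (simp add: linear_diff linear_scale)
  then show "(z \<circ> refl c) v = (refl (z c) \<circ> z) v"
    by (simp add: refl_def assms(2))
qed

lemma weyl_group_orthogonal:
  "w \<in> weyl_group \<Phi> \<Longrightarrow> linear w \<and> (\<forall>x y. w x \<bullet> w y = x \<bullet> y)"
proof (induction rule: weyl_group.induct)
  case (weyl_step w a)
  then show ?case using linear_compose[OF _ linear_refl, unfolded o_def] by (auto simp: inner_refl)
qed (simp add: linear_id[unfolded id_def])

lemma weyl_group_comp_refl:
  "w \<in> weyl_group \<Phi> \<Longrightarrow> w \<circ> refl c = refl (w c) \<circ> w"
  using weyl_group_orthogonal by (blast intro: orthogonal_comp_refl)

lemma weyl_group_uminus: "w \<in> weyl_group \<Phi> \<Longrightarrow> w (- v) = - w v"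
  using weyl_group_orthogonal linear_neg by blast

lemma weyl_group_comp:
  "w1 \<in> weyl_group \<Phi> \<Longrightarrow> w2 \<in> weyl_group \<Phi> \<Longrightarrow> w1 \<circ> w2 \<in> weyl_group \<Phi>"
  by (induction rule: weyl_group.induct) (auto simp: o_assoc[symmetric] intro: weyl_group.intros)

lemma refl_in_weyl_group: "a \<in> \<Phi> \<Longrightarrow> refl a \<in> weyl_group \<Phi>"
  using weyl_group.weyl_step[OF weyl_group.weyl_id] by fastforce

lemma weyl_group_has_inverse:
  "w \<in> weyl_group \<Phi> \<Longrightarrow> \<exists>w'\<in>weyl_group \<Phi>. w' \<circ> w = id \<and> w \<circ> w' = id"
proof (induction rule: weyl_group.induct)
  case weyl_id
  then show ?case by (intro bexI[of _ id] weyl_group.weyl_id) auto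
next
  case (weyl_step w a)
  then obtain w' where "w' \<in> weyl_group \<Phi>" "w' \<circ> w = id" "w \<circ> w' = id" by blast
  then show ?case
    using weyl_group_comp[OF _ refl_in_weyl_group[OF weyl_step(2)]] refl_comp_refl[of a]
    by (intro bexI[of _ "w' \<circ> refl a"]) (auto simp: o_assoc fun_eq_iff)
qed

lemma weyl_group_inv:
  assumes "w \<in> weyl_group \<Phi>"
  shows "inv w \<in> weyl_group \<Phi>" and "inv w \<circ> w = id" and "w \<circ> inv w = id"
proof -
  obtain w' where w': "w' \<in> weyl_group \<Phi>" "w' \<circ> w = id" "w \<circ> w' = id"
    using weyl_group_has_inverse[OF assms] by blast
  then have "inv w = w'" by (intro inv_unique_comp)
  with w' show "inv w \<in> weyl_group \<Phi>" "inv w \<circ> w = id" "w \<circ> inv w = id" by auto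
qed

lemma word_prod_Nil: "word_prod [] = id"
  by (simp add: word_prod_def)

lemma word_prod_Cons: "word_prod (a # as) = refl a \<circ> word_prod as"
  by (simp add: word_prod_def)

lemma word_prod_append: "word_prod (as @ bs) = word_prod as \<circ> word_prod bs"
  by (induction as) (auto simp: word_prod_Nil word_prod_Cons o_assoc)

lemma word_prod_in_weyl_group: "set as \<subseteq> \<Phi> \<Longrightarrow> word_prod as \<in> weyl_group \<Phi>"
  by (induction as) (auto simp: word_prod_Nil word_prod_Cons intro: weyl_group.intros)

section \<open>Positive and simple roots\<close>

locale positive_root_system =
  fixes \<Phi> P :: "'a::euclidean_space set"
  assumes root_system: "root_system \<Phi>" and positive_system: "positive_system \<Phi> P"
begin

abbreviation "W \<equiv> weyl_group \<Phi>"
abbreviation "len \<equiv> weyl_length P"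

lemma finite_roots: "finite \<Phi>"
  and zero_notin_roots: "0 \<notin> \<Phi>"
  and refl_root: "a \<in> \<Phi> \<Longrightarrow> b \<in> \<Phi> \<Longrightarrow> refl a b \<in> \<Phi>"
  and cartan_integer: "a \<in> \<Phi> \<Longrightarrow> b \<in> \<Phi> \<Longrightarrow> 2 * (b \<bullet> a) / (a \<bullet> a) \<in> \<int>"
  and root_multiple: "a \<in> \<Phi> \<Longrightarrow> c *\<^sub>R a \<in> \<Phi> \<Longrightarrow> c = 1 \<or> c = -1"
  using root_system by (auto simp: root_system_def)

lemma inner_root_self_pos: "a \<in> \<Phi> \<Longrightarrow> a \<bullet> a > 0"
  using zero_notin_roots by auto

lemma uminus_root: "a \<in> \<Phi> \<Longrightarrow> - a \<in> \<Phi>"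
  using refl_root[of a a] by (simp add: refl_self)

lemma weyl_group_root: "w \<in> W \<Longrightarrow> b \<in> \<Phi> \<Longrightarrow> w b \<in> \<Phi>"
  by (induction rule: weyl_group.induct) (simp_all add: refl_root)

definition pos_dir :: 'a where
  "pos_dir = (SOME u. (\<forall>b\<in>\<Phi>. u \<bullet> b \<noteq> 0) \<and> P = {b\<in>\<Phi>. u \<bullet> b > 0})"

lemma pos_dir: "\<forall>b\<in>\<Phi>. pos_dir \<bullet> b \<noteq> 0" "P = {b\<in>\<Phi>. pos_dir \<bullet> b > 0}"
proof -
  have "\<exists>u. (\<forall>b\<in>\<Phi>. u \<bullet> b \<noteq> 0) \<and> P = {b\<in>\<Phi>. u \<bullet> b > 0}"
    using positive_system by (auto simp: positive_system_def)
  then have "(\<forall>b\<in>\<Phi>. pos_dir \<bullet> b \<noteq> 0) \<and> P = {b\<in>\<Phi>. pos_dir \<bullet> b > 0}"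
    unfolding pos_dir_def by (rule someI_ex)
  then show "\<forall>b\<in>\<Phi>. pos_dir \<bullet> b \<noteq> 0" "P = {b\<in>\<Phi>. pos_dir \<bullet> b > 0}" by auto
qed

lemma positive_iff: "b \<in> P \<longleftrightarrow> b \<in> \<Phi> \<and> pos_dir \<bullet> b > 0"
  using pos_dir(2) by auto

lemma positive_root: "b \<in> P \<Longrightarrow> b \<in> \<Phi>"
  by (simp add: positive_iff)

lemma uminus_positive: "b \<in> P \<Longrightarrow> - b \<notin> P"
  by (simp add: positive_iff)

lemma uminus_not_positive: "b \<in> \<Phi> \<Longrightarrow> b \<notin> P \<Longrightarrow> - b \<in> P"
  using pos_dir(1) uminus_root[of b] by (force simp: positive_iff)

lemma simple_root_positive: "a \<in> simple_roots P \<Longrightarrow> a \<in> P"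
  by (simp add: simple_roots_def)

lemma simple_root_root: "a \<in> simple_roots P \<Longrightarrow> a \<in> \<Phi>"
  by (simp add: simple_root_positive positive_root)

lemma simple_root_not_sum: "a \<in> simple_roots P \<Longrightarrow> b \<in> P \<Longrightarrow> c \<in> P \<Longrightarrow> b + c \<noteq> a"
  by (auto simp: simple_roots_def)

lemma positive_root_induct [consumes 1, case_names less]:
  assumes "a \<in> P"
    and "\<And>a. a \<in> P \<Longrightarrow> (\<And>b. b \<in> P \<Longrightarrow> pos_dir \<bullet> b < pos_dir \<bullet> a \<Longrightarrow> Q b) \<Longrightarrow> Q a"
  shows "Q a"
  using assms(1)
proof (induction a rule: measure_induct_rule[of "\<lambda>a. card {b\<in>P. pos_dir \<bullet> b < pos_dir \<bullet> a}"])
  case (less a)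
  have "finite P" using finite_subset[OF _ finite_roots] positive_root by blast
  then have smaller: "card {c\<in>P. pos_dir \<bullet> c < pos_dir \<bullet> b} < card {c\<in>P. pos_dir \<bullet> c < pos_dir \<bullet> a}"
    if "b \<in> P" "pos_dir \<bullet> b < pos_dir \<bullet> a" for b
    using that by (intro psubset_card_mono) auto
  show ?case
    by (rule assms(2)[OF less.prems]) (rule less.IH[OF smaller]; assumption)
qed

lemma inner_sq_less_positive_roots:
  assumes a: "a \<in> P" and b: "b \<in> P" and ne: "b \<noteq> a"
  shows "(b \<bullet> a)\<^sup>2 < (a \<bullet> a) * (b \<bullet> b)"
proof (rule ccontr)
  assume "\<not> ?thesis"
  then have le: "(a \<bullet> a) * (b \<bullet> b) \<le> (b \<bullet> a)\<^sup>2" by simp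
  have aa: "a \<bullet> a > 0" using inner_root_self_pos positive_root a by blast
  define t where "t = (b \<bullet> a) / (a \<bullet> a)"
  have "(b - t *\<^sub>R a) \<bullet> (b - t *\<^sub>R a) = b \<bullet> b - (b \<bullet> a)\<^sup>2 / (a \<bullet> a)"
    using aa by (simp add: t_def inner_diff_left inner_diff_right inner_commute
        field_simps power2_eq_square)
  also have "\<dots> \<le> 0" using le aa by (simp add: field_simps)
  finally have "b = t *\<^sub>R a"
    using inner_gt_zero_iff[of "b - t *\<^sub>R a"] by (simp add: not_less[symmetric])
  then have "t = 1 \<or> t = -1" using root_multiple[of a t] positive_root a b by auto
  then show False using \<open>b = t *\<^sub>R a\<close> ne uminus_positive[OF a] b by auto
qed

lemma cartan_product_less_4:
  assumes a: "a \<in> P" and b: "b \<in> P" and ne: "b \<noteq> a"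
  shows "(2 * (b \<bullet> a) / (a \<bullet> a)) * (2 * (a \<bullet> b) / (b \<bullet> b)) < 4"
proof -
  have "a \<bullet> a > 0" "b \<bullet> b > 0" using inner_root_self_pos positive_root a b by auto
  then show ?thesis
    using inner_sq_less_positive_roots[OF assms]
    by (simp add: inner_commute field_simps power2_eq_square)
qed

lemma cartan_integer_dual_eq_1:
  assumes a: "a \<in> P" and b: "b \<in> P" and "b \<noteq> a"
    and cartan: "2 * (b \<bullet> a) / (a \<bullet> a) \<ge> 2"
  shows "2 * (a \<bullet> b) / (b \<bullet> b) = 1"
proof -
  have aPhi: "a \<in> \<Phi>" and bPhi: "b \<in> \<Phi>" using a b positive_root by auto
  have aa: "a \<bullet> a > 0" and bb: "b \<bullet> b > 0"
    using aPhi bPhi inner_root_self_pos by auto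
  define m where "m = 2 * (a \<bullet> b) / (b \<bullet> b)"
  have "b \<bullet> a \<ge> a \<bullet> a" using cartan aa by (simp add: le_divide_eq)
  then have "a \<bullet> b > 0" using aa by (metis inner_commute less_le_trans)
  then have "m > 0" unfolding m_def using bb by simp
  moreover have "2 * m < 4"
    using mult_right_mono[OF cartan, of m] cartan_product_less_4[OF a b \<open>b \<noteq> a\<close>] \<open>m > 0\<close>
    unfolding m_def by simp
  moreover obtain z where "m = of_int z"
    using cartan_integer[OF bPhi aPhi] unfolding m_def by (auto elim: Ints_cases)
  ultimately show "m = 1" by simp
qed

lemma cartan_integer_less_4:
  assumes a: "a \<in> P" and b: "b \<in> P" and "b \<noteq> a"
    and cartan: "2 * (b \<bullet> a) / (a \<bullet> a) \<ge> 2"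
  shows "2 * (b \<bullet> a) / (a \<bullet> a) < 4"
  using cartan_product_less_4[OF a b \<open>b \<noteq> a\<close>] cartan_integer_dual_eq_1[OF assms] by simp

lemma simple_root_sub_positive:
  assumes a: "a \<in> simple_roots P" and b: "b \<in> P" and "b \<noteq> a"
    and cartan: "2 * (b \<bullet> a) / (a \<bullet> a) \<ge> 2"
  shows "b - a \<in> P"
proof -
  have aP: "a \<in> P" and aPhi: "a \<in> \<Phi>" and bPhi: "b \<in> \<Phi>"
    using a b simple_root_positive positive_root by auto
  have "refl b a = a - b"
    unfolding refl_def cartan_integer_dual_eq_1[OF aP b \<open>b \<noteq> a\<close> cartan] by simp
  then have "a - b \<in> \<Phi>" using refl_root[OF bPhi aPhi] by simp
  moreover have "a - b \<notin> P" using simple_root_not_sum[OF a b, of "a - b"] by auto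
  ultimately show ?thesis using uminus_not_positive by fastforce
qed

text \<open>If s_a b were negative, the positive root k a - b (k the Cartan integer) would, for
  each of the possible values k = 1, 2, 3, exhibit a as a sum of two positive roots.\<close>
lemma refl_simple_root_positive:
  assumes a: "a \<in> simple_roots P" and b: "b \<in> P" and "b \<noteq> a"
  shows "refl a b \<in> P"
proof (rule ccontr)
  assume "refl a b \<notin> P"
  have aP: "a \<in> P" and aPhi: "a \<in> \<Phi>" and bPhi: "b \<in> \<Phi>"
    using a b simple_root_positive positive_root by auto
  have not_sum: "c + d \<noteq> a" if "c \<in> P" "d \<in> P" for c d
    using simple_root_not_sum[OF a that] .
  define k where "k = 2 * (b \<bullet> a) / (a \<bullet> a)"
  have kab: "k *\<^sub>R a - b \<in> P"
    using uminus_not_positive[OF refl_root[OF aPhi bPhi] \<open>refl a b \<notin> P\<close>]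
    by (simp add: refl_def k_def)
  have "pos_dir \<bullet> (k *\<^sub>R a - b) > 0" "pos_dir \<bullet> a > 0" "pos_dir \<bullet> b > 0"
    using kab aP b positive_iff by auto
  then have "k * (pos_dir \<bullet> a) > 0" by (simp add: inner_diff_right)
  then have "k > 0" using \<open>pos_dir \<bullet> a > 0\<close> by (simp add: zero_less_mult_iff)
  moreover obtain i where i: "k = of_int i"
    using cartan_integer[OF aPhi bPhi] unfolding k_def by (auto elim: Ints_cases)
  moreover have "k \<noteq> 1" using kab not_sum[OF b, of "a - b"] by auto
  ultimately have "k \<ge> 2" by simp
  then have ba: "b - a \<in> P" using simple_root_sub_positive[OF a b \<open>b \<noteq> a\<close>] by (simp add: k_def)
  have "k \<noteq> 2" using kab not_sum[OF ba, of "2 *\<^sub>R a - b"] by (auto simp: scaleR_2)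
  moreover have "k < 4" using cartan_integer_less_4[OF aP b \<open>b \<noteq> a\<close>] \<open>k \<ge> 2\<close> by (simp add: k_def)
  ultimately have "k = 3" using \<open>k \<ge> 2\<close> i by simp
  have coeff: "2 * ((b - a) \<bullet> a) / (a \<bullet> a) = k - 2"
    using inner_root_self_pos[OF aPhi] by (simp add: k_def inner_diff_left field_simps)
  have "refl a (b - a) = b - 2 *\<^sub>R a"
    unfolding refl_def coeff \<open>k = 3\<close> by (simp add: algebra_simps scaleR_2)
  then have "b - 2 *\<^sub>R a \<in> \<Phi>" using refl_root[OF aPhi positive_root[OF ba]] by simp
  then consider "b - 2 *\<^sub>R a \<in> P" | "2 *\<^sub>R a - b \<in> P"
    using uminus_not_positive by fastforce
  then show False
  proof cases
    case 1
    then show False using kab \<open>k = 3\<close> not_sum[OF 1, of "3 *\<^sub>R a - b"]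
      by (auto simp: algebra_simps scaleR_left_distrib[of 1 2 a, simplified])
  next
    case 2
    then show False using not_sum[OF ba 2] by (auto simp: scaleR_2)
  qed
qed

lemma refl_simple_root_positive_iff:
  assumes a: "a \<in> simple_roots P" and b: "b \<in> \<Phi>" and "b \<noteq> a" and "b \<noteq> - a"
  shows "refl a b \<in> P \<longleftrightarrow> b \<in> P"
proof
  assume "refl a b \<in> P"
  show "b \<in> P"
  proof (rule ccontr)
    assume "b \<notin> P"
    then have "refl a (- b) \<in> P"
      using refl_simple_root_positive[OF a uminus_not_positive[OF b]] \<open>b \<noteq> - a\<close>
      by (metis minus_minus)
    then show False using uminus_positive \<open>refl a b \<in> P\<close> by (simp add: refl_minus)
  qed
qed (use refl_simple_root_positive[OF a] \<open>b \<noteq> a\<close> in blast)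

lemma nonpos_on_positive_roots:
  assumes "\<forall>a\<in>simple_roots P. v \<bullet> a \<le> 0" and "b \<in> P"
  shows "v \<bullet> b \<le> 0"
  using assms(2)
proof (induction rule: positive_root_induct)
  case (less b)
  show ?case
  proof (cases "b \<in> simple_roots P")
    case True
    then show ?thesis using assms(1) by blast
  next
    case False
    then obtain c d where cd: "c \<in> P" "d \<in> P" "b = c + d"
      using less(1) by (auto simp: simple_roots_def)
    then have "pos_dir \<bullet> c < pos_dir \<bullet> b" "pos_dir \<bullet> d < pos_dir \<bullet> b"
      using positive_iff by (auto simp: inner_add_right)
    then show ?thesis using less(2)[of c] less(2)[of d] cd by (simp add: inner_add_right)
  qed
qed

lemma exists_simple_root_inner_pos:
  assumes "b \<in> P" shows "\<exists>a\<in>simple_roots P. b \<bullet> a > 0"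
proof (rule ccontr)
  assume "\<not> ?thesis"
  then have "b \<bullet> b \<le> 0" using nonpos_on_positive_roots[of b b] assms by fastforce
  then show False using inner_root_self_pos positive_root assms by fastforce
qed

text \<open>Induction on height: a non-simple positive root b has a simple root a with
  b \<bullet> a > 0, so that s_a b is a lower positive root, and s_b = s_a s_{s_a b} s_a.\<close>
lemma refl_positive_root_word:
  assumes "b \<in> P"
  shows "\<exists>as. set as \<subseteq> simple_roots P \<and> word_prod as = refl b"
  using assms
proof (induction rule: positive_root_induct)
  case (less b)
  show ?case
  proof (cases "b \<in> simple_roots P")
    case True
    then show ?thesis by (intro exI[of _ "[b]"]) (simp add: word_prod_Cons word_prod_Nil)
  next
    case False
    obtain a where a: "a \<in> simple_roots P" "b \<bullet> a > 0"
      using exists_simple_root_inner_pos less(1) by blast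
    have aPhi: "a \<in> \<Phi>" using a simple_root_root by blast
    define b' where "b' = refl a b"
    have b'P: "b' \<in> P"
      unfolding b'_def using refl_simple_root_positive a less(1) False by blast
    have "pos_dir \<bullet> b' = pos_dir \<bullet> b - (2 * (b \<bullet> a) / (a \<bullet> a)) * (pos_dir \<bullet> a)"
      by (simp add: b'_def refl_def inner_diff_right)
    moreover have "(2 * (b \<bullet> a) / (a \<bullet> a)) * (pos_dir \<bullet> a) > 0"
      using a inner_root_self_pos[OF aPhi] simple_root_positive positive_iff by simp
    ultimately obtain as where as: "set as \<subseteq> simple_roots P" "word_prod as = refl b'"
      using less(2)[OF b'P] by fastforce
    have "refl a \<circ> refl b' = refl (refl a b') \<circ> refl a"
      by (rule weyl_group_comp_refl[OF refl_in_weyl_group[OF aPhi]])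
    then have "refl a \<circ> refl b' \<circ> refl a = refl (refl a b') \<circ> (refl a \<circ> refl a)"
      by (simp only: o_assoc)
    also have "\<dots> = refl b"
      by (simp add: b'_def refl_refl refl_comp_refl)
    finally have "refl a \<circ> refl b' \<circ> refl a = refl b" .
    then show ?thesis
      using as a by (intro exI[of _ "a # as @ [a]"])
        (auto simp: word_prod_Cons word_prod_append word_prod_Nil o_assoc)
  qed
qed

lemma refl_root_word:
  "b \<in> \<Phi> \<Longrightarrow> \<exists>as. set as \<subseteq> simple_roots P \<and> word_prod as = refl b"
  using refl_positive_root_word uminus_not_positive refl_uminus by metis

lemma weyl_group_word:
  "w \<in> W \<Longrightarrow> \<exists>as. set as \<subseteq> simple_roots P \<and> word_prod as = w"
proof (induction rule: weyl_group.induct)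
  case weyl_id
  then show ?case by (intro exI[of _ "[]"]) (simp add: word_prod_Nil)
next
  case (weyl_step w a)
  then obtain as bs where "set as \<subseteq> simple_roots P" "word_prod as = w"
    "set bs \<subseteq> simple_roots P" "word_prod bs = refl a"
    using refl_root_word by blast
  then show ?case by (intro exI[of _ "bs @ as"]) (auto simp: word_prod_append)
qed

section \<open>Length and the Bruhat order\<close>

lemma reduced_word_exists:
  assumes "w \<in> W"
  shows "\<exists>as. set as \<subseteq> simple_roots P \<and> length as = len w \<and> word_prod as = w"
proof -
  have "\<exists>n as. set as \<subseteq> simple_roots P \<and> length as = n \<and> word_prod as = w"
    using weyl_group_word[OF assms] by blast
  then show ?thesis unfolding weyl_length_def by (rule LeastI_ex)
qed

lemma weyl_length_le: "set as \<subseteq> simple_roots P \<Longrightarrow> len (word_prod as) \<le> length as"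
  unfolding weyl_length_def by (rule Least_le) blast

text \<open>Delete the first letter s_a whose suffix z sends c to a positive root: since s_a z c
  is negative, z c = a by refl_simple_root_positive, hence z s_c = s_a z.\<close>
lemma word_prod_deletion:
  assumes "set as \<subseteq> simple_roots P" and "c \<in> P" and "word_prod as c \<notin> P"
  shows "\<exists>bs. set bs \<subseteq> simple_roots P \<and> length bs + 1 = length as
    \<and> word_prod bs = word_prod as \<circ> refl c"
  using assms(1,3)
proof (induction as)
  case Nil
  then show ?case using assms(2) by (simp add: word_prod_Nil)
next
  case (Cons a as)
  define z where "z = word_prod as"
  have a: "a \<in> simple_roots P" and as: "set as \<subseteq> simple_roots P" using Cons.prems by auto
  have zW: "z \<in> W" unfolding z_def using word_prod_in_weyl_group as simple_root_root by blast
  show ?case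
  proof (cases "z c \<in> P")
    case False
    then obtain bs where "set bs \<subseteq> simple_roots P" "length bs + 1 = length as"
      "word_prod bs = z \<circ> refl c"
      using Cons.IH as unfolding z_def by blast
    then show ?thesis using a
      by (intro exI[of _ "a # bs"]) (auto simp: word_prod_Cons z_def o_assoc)
  next
    case True
    have "refl a (z c) \<notin> P" using Cons.prems(2) by (simp add: word_prod_Cons z_def)
    then have "z c = a" using refl_simple_root_positive[OF a True] by blast
    then have "z \<circ> refl c = refl a \<circ> z" using weyl_group_comp_refl[OF zW] by simp
    then have "word_prod (a # as) \<circ> refl c = z"
      by (simp add: word_prod_Cons z_def comp_assoc refl_comp_refl_comp)
    then show ?thesis using as by (intro exI[of _ as]) (simp add: z_def)
  qed
qed

lemma length_right_refl_less:
  assumes w: "w \<in> W" and c: "c \<in> P" and "w c \<notin> P"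
  shows "len (w \<circ> refl c) < len w"
proof -
  obtain as where as: "set as \<subseteq> simple_roots P" "length as = len w" "word_prod as = w"
    using reduced_word_exists[OF w] by blast
  obtain bs where "set bs \<subseteq> simple_roots P" "length bs + 1 = length as"
    "word_prod bs = w \<circ> refl c"
    using word_prod_deletion[OF as(1) c] \<open>w c \<notin> P\<close> as(3) by blast
  then show ?thesis using weyl_length_le[of bs] as(2) by simp
qed

lemma length_right_refl_greater:
  assumes w: "w \<in> W" and c: "c \<in> P" and "w c \<in> P"
  shows "len w < len (w \<circ> refl c)"
proof -
  have cPhi: "c \<in> \<Phi>" using c positive_root by blast
  have "(w \<circ> refl c) c \<notin> P"
    using weyl_group_uminus[OF w] uminus_positive[OF \<open>w c \<in> P\<close>] by (simp add: refl_self)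
  then have "len (w \<circ> refl c \<circ> refl c) < len (w \<circ> refl c)"
    using length_right_refl_less[OF weyl_group_comp[OF w refl_in_weyl_group[OF cPhi]] c] by blast
  then show ?thesis by (simp add: o_assoc[symmetric] refl_comp_refl)
qed

lemma length_right_refl_greater_iff:
  "w \<in> W \<Longrightarrow> c \<in> P \<Longrightarrow> len w < len (w \<circ> refl c) \<longleftrightarrow> w c \<in> P"
  using length_right_refl_greater length_right_refl_less by (meson order.asym)

lemma length_right_refl_neq: "w \<in> W \<Longrightarrow> c \<in> P \<Longrightarrow> len (w \<circ> refl c) \<noteq> len w"
  using length_right_refl_greater length_right_refl_less by (metis less_irrefl)

lemma left_refl_eq_right_refl:
  assumes w: "w \<in> W" and a: "a \<in> \<Phi>"
  shows "\<exists>c\<in>P. refl a \<circ> w = w \<circ> refl c"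
proof -
  define c where "c = inv w a"
  have "c \<in> \<Phi>" unfolding c_def using weyl_group_root[OF weyl_group_inv(1)[OF w] a] .
  moreover have "w \<circ> refl c = refl a \<circ> w"
    using weyl_group_comp_refl[OF w, of c] weyl_group_inv(3)[OF w]
    by (simp add: c_def fun_eq_iff)
  ultimately show ?thesis using uminus_not_positive refl_uminus by metis
qed

lemma length_left_refl_neq: "w \<in> W \<Longrightarrow> a \<in> \<Phi> \<Longrightarrow> len (refl a \<circ> w) \<noteq> len w"
  using left_refl_eq_right_refl length_right_refl_neq by metis

lemma inv_simple_root_not_positive:
  assumes w: "w \<in> W" and a: "a \<in> simple_roots P" and "len (refl a \<circ> w) < len w"
  shows "inv w a \<notin> P"
proof
  assume "inv w a \<in> P"
  have "w (inv w a) = a" using weyl_group_inv(3)[OF w] by (simp add: fun_eq_iff)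
  moreover have "w \<circ> refl (inv w a) = refl a \<circ> w"
    using weyl_group_comp_refl[OF w] calculation by simp
  ultimately show False
    using length_right_refl_greater[OF w \<open>inv w a \<in> P\<close>] assms(3) simple_root_positive[OF a]
    by simp
qed

lemma bruhat_le_weyl_group: "bruhat_le \<Phi> P x y \<Longrightarrow> x \<in> W \<and> y \<in> W"
proof (induction rule: bruhat_le.induct)
  case (bruhat_step x y b)
  then show ?case using weyl_group_comp[OF _ refl_in_weyl_group[OF positive_root]] by blast
qed simp

lemma bruhat_le_length: "bruhat_le \<Phi> P x y \<Longrightarrow> x = y \<or> len x < len y"
  by (induction rule: bruhat_le.induct) (simp, metis less_trans)

lemma bruhat_lt_length: "bruhat_lt \<Phi> P x y \<Longrightarrow> len x < len y"
  using bruhat_le_length by (auto simp: bruhat_lt_def)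

lemma bruhat_le_trans:
  assumes "bruhat_le \<Phi> P x y" and "bruhat_le \<Phi> P y z"
  shows "bruhat_le \<Phi> P x z"
  using assms(2,1) by (induction rule: bruhat_le.induct) (auto intro: bruhat_le.intros)

lemma bruhat_le_right_refl:
  "w \<in> W \<Longrightarrow> c \<in> P \<Longrightarrow> len w < len (w \<circ> refl c) \<Longrightarrow> bruhat_le \<Phi> P w (w \<circ> refl c)"
  by (rule bruhat_le.bruhat_step[OF bruhat_le.bruhat_refl])

lemma bruhat_le_left_refl:
  "w \<in> W \<Longrightarrow> a \<in> \<Phi> \<Longrightarrow> len w < len (refl a \<circ> w) \<Longrightarrow> bruhat_le \<Phi> P w (refl a \<circ> w)"
  using left_refl_eq_right_refl bruhat_le_right_refl by metis

lemma bruhat_lt_right_refl_iff: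
  assumes w: "w \<in> W" and c: "c \<in> P"
  shows "bruhat_lt \<Phi> P (w \<circ> refl c) w \<longleftrightarrow> w c \<notin> P"
proof
  assume "bruhat_lt \<Phi> P (w \<circ> refl c) w"
  then show "w c \<notin> P"
    using bruhat_lt_length length_right_refl_greater_iff[OF w c] by fastforce
next
  assume "w c \<notin> P"
  have w': "w \<circ> refl c \<in> W" using weyl_group_comp[OF w refl_in_weyl_group] c positive_root by blast
  have w'': "w \<circ> refl c \<circ> refl c = w" by (simp add: o_assoc[symmetric] refl_comp_refl)
  have "len (w \<circ> refl c) < len w" using length_right_refl_less[OF w c \<open>w c \<notin> P\<close>] .
  then show "bruhat_lt \<Phi> P (w \<circ> refl c) w"
    using bruhat_le_right_refl[OF w' c] w'' unfolding bruhat_lt_def by auto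
qed

text \<open>Induction along a chain x \<le> y < y s_b: either s_a y = y s_b, or s_a keeps the root y b
  positive, so that s_a y < s_a y s_b is again a Bruhat step.\<close>
lemma bruhat_le_lift:
  assumes "bruhat_le \<Phi> P x u" and a: "a \<in> simple_roots P"
    and "len (refl a \<circ> u) < len u" and "len x < len (refl a \<circ> x)"
  shows "bruhat_le \<Phi> P x (refl a \<circ> u)"
  using assms(1,3,4)
proof (induction rule: bruhat_le.induct)
  case (bruhat_refl x)
  then show ?case by linarith
next
  case (bruhat_step x y b)
  have aPhi: "a \<in> \<Phi>" using a simple_root_root by blast
  have y: "y \<in> W" using bruhat_le_weyl_group[OF bruhat_step(1)] by blast
  have ay: "refl a \<circ> y \<in> W" using weyl_group_comp[OF refl_in_weyl_group[OF aPhi] y] .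
  have yb: "y b \<in> P" using length_right_refl_greater_iff[OF y bruhat_step(2)] bruhat_step(3) by blast
  show ?case
  proof (cases "y b = a")
    case True
    then have "refl a \<circ> (y \<circ> refl b) = y"
      using weyl_group_comp_refl[OF y] by (simp add: refl_comp_refl_comp)
    then show ?thesis using bruhat_step(1) by metis
  next
    case False
    then have "(refl a \<circ> y) b \<in> P" using refl_simple_root_positive[OF a yb] by simp
    then have "bruhat_le \<Phi> P (refl a \<circ> y) (refl a \<circ> (y \<circ> refl b))"
      using bruhat_le_right_refl[OF ay bruhat_step(2)] length_right_refl_greater_iff[OF ay bruhat_step(2)]
      by (simp add: o_assoc)
    moreover have "bruhat_le \<Phi> P x (refl a \<circ> y)"
    proof (cases "len (refl a \<circ> y) < len y")
      case True
      then show ?thesis using bruhat_step.IH bruhat_step.prems(2) by blast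
    next
      case False
      then have "len y < len (refl a \<circ> y)" using length_left_refl_neq[OF y aPhi] by linarith
      then show ?thesis using bruhat_le_left_refl[OF y aPhi] bruhat_step(1) bruhat_le_trans by blast
    qed
    ultimately show ?thesis using bruhat_le_trans by blast
  qed
qed

lemma bruhat_le_left_simple_refl:
  assumes "bruhat_le \<Phi> P x v" and a: "a \<in> simple_roots P" and "len x < len (refl a \<circ> x)"
  shows "bruhat_le \<Phi> P x (refl a \<circ> v)"
proof (cases "len (refl a \<circ> v) < len v")
  case True
  then show ?thesis using bruhat_le_lift assms by blast
next
  case False
  have aPhi: "a \<in> \<Phi>" using a simple_root_root by blast
  have v: "v \<in> W" using bruhat_le_weyl_group[OF assms(1)] by blast
  have "len v < len (refl a \<circ> v)" using False length_left_refl_neq[OF v aPhi] by linarith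
  then show ?thesis using bruhat_le_left_refl[OF v aPhi] assms(1) bruhat_le_trans by blast
qed

lemma S_set_eq:
  "w \<in> W \<Longrightarrow> S_set \<Phi> P x w = {c\<in>P. bruhat_le \<Phi> P x (w \<circ> refl c) \<and> w c \<notin> P}"
  by (auto simp: S_set_def bruhat_lt_right_refl_iff)

theorem S_set_left_simple_refl:
  assumes w: "w \<in> W" and a: "a \<in> simple_roots P"
    and "len (refl a \<circ> w) < len w" and "len x < len (refl a \<circ> x)"
  shows "S_set \<Phi> P x (refl a \<circ> w) = S_set \<Phi> P x w - {- inv w a}"
proof -
  define c where "c = inv w a"
  have aPhi: "a \<in> \<Phi>" using a simple_root_root by blast
  have aw: "refl a \<circ> w \<in> W" using weyl_group_comp[OF refl_in_weyl_group[OF aPhi] w] .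
  have wc: "w c = a" using weyl_group_inv(3)[OF w] by (simp add: c_def fun_eq_iff)
  have "c \<notin> P" using inv_simple_root_not_positive[OF w a assms(3)] by (simp add: c_def)
  have bruhat: "bruhat_le \<Phi> P x (refl a \<circ> w \<circ> refl g) \<longleftrightarrow> bruhat_le \<Phi> P x (w \<circ> refl g)" for g
    using bruhat_le_left_simple_refl[OF _ a assms(4)] by (metis comp_assoc refl_comp_refl_comp)
  have descent: "refl a (w g) \<notin> P \<longleftrightarrow> w g \<notin> P" if "g \<in> P" "g \<noteq> - c" for g
  proof -
    have "w g \<noteq> a" using \<open>c \<notin> P\<close> that(1) wc weyl_group_inv(2)[OF w] by (metis comp_apply id_apply)
    moreover have "w g \<noteq> - a"
      using that(2) wc weyl_group_inv(2)[OF w] weyl_group_uminus[OF w]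
      by (metis comp_apply id_apply)
    ultimately show ?thesis
      using refl_simple_root_positive_iff[OF a weyl_group_root[OF w positive_root[OF that(1)]]] by blast
  qed
  have "refl a (w (- c)) \<in> P"
    using wc weyl_group_uminus[OF w] simple_root_positive[OF a] by (simp add: refl_minus refl_self)
  then show ?thesis
    unfolding S_set_eq[OF w] S_set_eq[OF aw] c_def[symmetric] using bruhat descent by auto
qed

end

theorem lemma5p4:
  fixes \<Phi> P :: "'a::euclidean_space set" and x w :: "'a \<Rightarrow> 'a" and \<alpha> :: 'a
  assumes "root_system \<Phi>" and "positive_system \<Phi> P"
    and "x \<in> weyl_group \<Phi>" and "w \<in> weyl_group \<Phi>"
    and "\<alpha> \<in> simple_roots P"
    and "bruhat_lt \<Phi> P x w"
    and "bruhat_lt \<Phi> P (refl \<alpha> \<circ> w) w"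
    and "bruhat_lt \<Phi> P x (refl \<alpha> \<circ> x)"
    and "card (S_set \<Phi> P x w) = weyl_length P w - weyl_length P x"
  shows "S_set \<Phi> P x (refl \<alpha> \<circ> w) = S_set \<Phi> P x w - {- (inv w \<alpha>)}"
proof -
  interpret positive_root_system \<Phi> P using assms(1,2) by unfold_locales
  show ?thesis
    using S_set_left_simple_refl[OF assms(4,5)] bruhat_lt_length assms(7,8) by blast
qed

end
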